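(* Let $\mathbf R=\{R_i,t_i\}_{i\ge0}$ be a preperfectoid tower arising from a pair $(R,I_0)$, with $0$-th small tilt $R^{s.\flat}$ and ideal $I_0^{s.\flat}\subset R^{s.\flat}$. Then for every $i\ge0$ the ring homomorphism $R^{s.\flat}/(I_0^{s.\flat})^{p^i}\to R^{s.\flat}/(I_0^{s.\flat})^{p^{i+1}}$, $x\mapsto x^p$, induced by the absolute Frobenius of $R^{s.\flat}$, is injective.
   Context: Fix a prime $p$; rings are commutative with $1$. For a ring $A$, an ideal $I$ and an $A$-module $M$, $M_{I\text{-tor}}$ is the submodule of $x\in M$ such that for every $a\in I$ some $a^nx=0$; $\varphi_{I,A}\colon A_{I\text{-tor}}\to A/IA$ is inclusion followed by projection. $\varphi$ is absolute Frobenius. A tower of rings $\mathbf R=\{R_i,t_i\}_{i\ge0}$ is a sequence of ring maps $R_0\xrightarrow{t_0}R_1\to\cdots$. For a ring $R$ and ideal $I_0$, write $\overline{R_i}=R_i/I_0R_i$, $\overline{t_i}$ the induced maps. A purely inseparable tower arising from $(R,I_0)$: (a) $R_0=R$, $p\in I_0$; (b) each $\overline{t_i}$ injective; (c) $\varphi(\overline{R_{i+1}})\subset\overline{t_i}(\overline{R_i})$; then $F_i\colon\overline{R_{i+1}}\to\overline{R_i}$ is the unique ring map with $\overline{t_i}\circ F_i=\varphi$. A preperfectoid tower is a purely inseparable tower with: (d) each $F_i$ surjective; (f) $I_0$ principal and a principal ideal $I_1\subset R_1$ with $I_1^p=I_0R_1$ and $\ker F_i=I_1\overline{R_{i+1}}$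 for all $i$; (g) for all $i$, $I_0(R_i)_{I_0\text{-tor}}=0$ and a bijection $(F_i)_{\mathrm{tor}}\colon(R_{i+1})_{I_0\text{-tor}}\to(R_i)_{I_0\text{-tor}}$ with $\varphi_{I_0,R_i}\circ(F_i)_{\mathrm{tor}}=F_i\circ\varphi_{I_0,R_{i+1}}$. Small tilt: $R^{s.\flat}:=\varprojlim(\cdots\xrightarrow{F_1}\overline{R_1}\xrightarrow{F_0}\overline{R_0})$ and $I_0^{s.\flat}$ is the kernel of the projection $R^{s.\flat}\to R/I_0$. *)

theory Defs
  imports "HOL-Algebra.Algebra" "HOL-Algebra.Ideal_Product"
begin

text \<open>Towers of commutative rings are modelled as sequences of HOL-Algebra rings
  R :: nat => 'a ring over a common carrier type, with transition maps t i : R i -> R (i+1).\<close>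

primrec tower_map :: "(nat \<Rightarrow> 'a \<Rightarrow> 'a) \<Rightarrow> nat \<Rightarrow> nat \<Rightarrow> 'a \<Rightarrow> 'a" where
  "tower_map t m 0 = (\<lambda>x. x)"
| "tower_map t m (Suc k) = t (m + k) \<circ> tower_map t m k"

definition ext_ideal :: "(nat \<Rightarrow> 'a ring) \<Rightarrow> (nat \<Rightarrow> 'a \<Rightarrow> 'a) \<Rightarrow> 'a set \<Rightarrow> nat \<Rightarrow> 'a set" where
  "ext_ideal R t I0 i = Idl\<^bsub>R i\<^esub> (tower_map t 0 i ` I0)"

definition Rbar :: "(nat \<Rightarrow> 'a ring) \<Rightarrow> (nat \<Rightarrow> 'a \<Rightarrow> 'a) \<Rightarrow> 'a set \<Rightarrow> nat \<Rightarrow> 'a set ring" where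
  "Rbar R t I0 i = R i Quot ext_ideal R t I0 i"

definition tbar :: "(nat \<Rightarrow> 'a ring) \<Rightarrow> (nat \<Rightarrow> 'a \<Rightarrow> 'a) \<Rightarrow> 'a set \<Rightarrow> nat \<Rightarrow> 'a set \<Rightarrow> 'a set" where
  "tbar R t I0 i Y = ext_ideal R t I0 (Suc i) <+>\<^bsub>R (Suc i)\<^esub> (t i ` Y)"

definition torsion :: "'a ring \<Rightarrow> 'a set \<Rightarrow> 'a set" where
  "torsion A I = {x \<in> carrier A. \<forall>a\<in>I. \<exists>n::nat. a [^]\<^bsub>A\<^esub> n \<otimes>\<^bsub>A\<^esub> x = \<zero>\<^bsub>A\<^esub>}"

definition phi_tor :: "'a ring \<Rightarrow> 'a set \<Rightarrow> 'a \<Rightarrow> 'a set" where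
  "phi_tor A I x = I +>\<^bsub>A\<^esub> x"

definition purely_inseparable_tower ::
  "nat \<Rightarrow> (nat \<Rightarrow> 'a ring) \<Rightarrow> (nat \<Rightarrow> 'a \<Rightarrow> 'a) \<Rightarrow> 'a set \<Rightarrow> bool" where
  "purely_inseparable_tower p R t I0 \<longleftrightarrow>
     (\<forall>i. cring (R i)) \<and> (\<forall>i. t i \<in> ring_hom (R i) (R (Suc i))) \<and>
     ideal I0 (R 0) \<and> add_pow (R 0) p \<one>\<^bsub>R 0\<^esub> \<in> I0 \<and>
     (\<forall>i. inj_on (tbar R t I0 i) (carrier (Rbar R t I0 i))) \<and>
     (\<forall>i. \<forall>Y\<in>carrier (Rbar R t I0 (Suc i)).
          Y [^]\<^bsub>Rbar R t I0 (Suc i)\<^esub> p \<in> tbar R t I0 i ` carrier (Rbar R t I0 i))"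

definition Frob_F :: "nat \<Rightarrow> (nat \<Rightarrow> 'a ring) \<Rightarrow> (nat \<Rightarrow> 'a \<Rightarrow> 'a) \<Rightarrow> 'a set \<Rightarrow> nat \<Rightarrow> 'a set \<Rightarrow> 'a set" where
  "Frob_F p R t I0 i Z = (THE Y. Y \<in> carrier (Rbar R t I0 i) \<and>
      tbar R t I0 i Y = pow (Rbar R t I0 (Suc i)) Z p)"

definition preperfectoid_tower ::
  "nat \<Rightarrow> (nat \<Rightarrow> 'a ring) \<Rightarrow> (nat \<Rightarrow> 'a \<Rightarrow> 'a) \<Rightarrow> 'a set \<Rightarrow> bool" where
  "preperfectoid_tower p R t I0 \<longleftrightarrow>
     purely_inseparable_tower p R t I0 \<and>
     \<comment> \<open>(d) each F_i surjective\<close>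
     (\<forall>i. Frob_F p R t I0 i ` carrier (Rbar R t I0 (Suc i)) = carrier (Rbar R t I0 i)) \<and>
     \<comment> \<open>(f)\<close>
     (\<exists>a\<in>carrier (R 0). I0 = PIdl\<^bsub>R 0\<^esub> a) \<and>
     (\<exists>I1. (\<exists>b\<in>carrier (R 1). I1 = PIdl\<^bsub>R 1\<^esub> b) \<and>
           I1 [^]\<^bsub>ideals_set (R 1)\<^esub> p = ext_ideal R t I0 1 \<and>
           (\<forall>i. {Z \<in> carrier (Rbar R t I0 (Suc i)). Frob_F p R t I0 i Z = \<zero>\<^bsub>Rbar R t I0 i\<^esub>}
                = (\<lambda>x. ext_ideal R t I0 (Suc i) +>\<^bsub>R (Suc i)\<^esub> x) `
                    (Idl\<^bsub>R (Suc i)\<^esub> (tower_map t 1 i ` I1)))) \<and>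
     \<comment> \<open>(g)\<close>
     (\<forall>i. \<forall>a\<in>ext_ideal R t I0 i. \<forall>x\<in>torsion (R i) (ext_ideal R t I0 i).
          a \<otimes>\<^bsub>R i\<^esub> x = \<zero>\<^bsub>R i\<^esub>) \<and>
     (\<forall>i. \<exists>g. bij_betw g (torsion (R (Suc i)) (ext_ideal R t I0 (Suc i)))
                         (torsion (R i) (ext_ideal R t I0 i)) \<and>
             (\<forall>x\<in>torsion (R (Suc i)) (ext_ideal R t I0 (Suc i)).
                phi_tor (R i) (ext_ideal R t I0 i) (g x) =
                Frob_F p R t I0 i (phi_tor (R (Suc i)) (ext_ideal R t I0 (Suc i)) x)))"

definition small_tilt :: "nat \<Rightarrow> (nat \<Rightarrow> 'a ring) \<Rightarrow> (nat \<Rightarrow> 'a \<Rightarrow> 'a) \<Rightarrow> 'a set \<Rightarrow> (nat \<Rightarrow> 'a set) ring" where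
  "small_tilt p R t I0 =
     \<lparr> carrier = {f. \<forall>i. f i \<in> carrier (Rbar R t I0 i) \<and> Frob_F p R t I0 i (f (Suc i)) = f i},
       monoid.mult = (\<lambda>f g i. f i \<otimes>\<^bsub>Rbar R t I0 i\<^esub> g i),
       one = (\<lambda>i. \<one>\<^bsub>Rbar R t I0 i\<^esub>),
       ring.zero = (\<lambda>i. \<zero>\<^bsub>Rbar R t I0 i\<^esub>),
       ring.add = (\<lambda>f g i. f i \<oplus>\<^bsub>Rbar R t I0 i\<^esub> g i) \<rparr>"

definition small_tilt_ideal :: "nat \<Rightarrow> (nat \<Rightarrow> 'a ring) \<Rightarrow> (nat \<Rightarrow> 'a \<Rightarrow> 'a) \<Rightarrow> 'a set \<Rightarrow> (nat \<Rightarrow> 'a set) set" where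
  "small_tilt_ideal p R t I0 =
     {f \<in> carrier (small_tilt p R t I0). f 0 = \<zero>\<^bsub>Rbar R t I0 0\<^esub>}"

definition frob_quot :: "('b, 'c) ring_scheme \<Rightarrow> nat \<Rightarrow> 'b set \<Rightarrow> 'b set \<Rightarrow> 'b set" where
  "frob_quot S p J' Z = the_elem ((\<lambda>x. J' +>\<^bsub>S\<^esub> (x [^]\<^bsub>S\<^esub> p)) ` Z)"

end

theory Submission
  imports Defs
begin

text \<open>
  The small tilt S is the inverse limit of the rings B_i = R_i / I0 R_i along the maps F_i, and
  I0^{s.flat} is the kernel J_0 of the projection S -> B_0. Let J_i be the kernel of S -> B_i.
  Because T_i is injective and T_i (x_i) = x_(i+1)^p for x in S, Frobenius maps each J_i-coset into
  a J_(i+1)-coset and distinct J_i-cosets into distinct J_(i+1)-cosets. It therefore suffices to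
  show J_i = J_0^(p^i).

  Since the F_i are surjective, there is w in S with w_0 = 0 and w_1 the image of a generator of
  I_1. Then w_(n+1)^(p^n) generates ker F_n and w_k^(p^k) = 0, so w^(p^i) lies in J_i. Conversely,
  let x_i = 0. The cofactors h with h w_n^(p^i) = x_n need not be compatible under the F_n, but
  their images i+1 levels lower form an inverse system with surjective maps; a compatible choice
  gives y in S with x = y w^(p^i). Hence J_i = (w^(p^i)), and in particular
  J_i = (w)^(p^i) = J_0^(p^i).
\<close>

section \<open>Rings of prime characteristic\<close>

lemma (in cring) binomial_pascal:
  assumes a: "a \<in> carrier R" and b: "b \<in> carrier R" and k: "k \<le> n"
  shows "add_pow R (Suc n choose Suc k) (a [^] Suc k \<otimes> b [^] (Suc n - Suc k))
    = a \<otimes> add_pow R (n choose k) (a [^] k \<otimes> b [^] (n - k))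
      \<oplus> b \<otimes> add_pow R (n choose Suc k) (a [^] Suc k \<otimes> b [^] (n - Suc k))"
proof -
  have "add_pow R (Suc n choose Suc k) (a [^] Suc k \<otimes> b [^] (Suc n - Suc k))
      = add_pow R (n choose k) (a [^] Suc k \<otimes> b [^] (n - k))
        \<oplus> add_pow R (n choose Suc k) (a [^] Suc k \<otimes> b [^] (n - k))"
    using a b by (simp add: add.nat_pow_mult)
  also have "add_pow R (n choose k) (a [^] Suc k \<otimes> b [^] (n - k))
      = a \<otimes> add_pow R (n choose k) (a [^] k \<otimes> b [^] (n - k))"
    using a b by (simp add: add_pow_rdistr m_ac)
  also have "add_pow R (n choose Suc k) (a [^] Suc k \<otimes> b [^] (n - k))
      = b \<otimes> add_pow R (n choose Suc k) (a [^] Suc k \<otimes> b [^] (n - Suc k))"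
  proof (cases "k = n")
    case False
    then have "n - k = Suc (n - Suc k)" using k by simp
    then show ?thesis using a b by (simp add: add_pow_rdistr m_ac)
  qed (use a b in \<open>simp add: binomial_eq_0\<close>)
  finally show ?thesis .
qed

lemma (in cring) binomial_ring:
  assumes a: "a \<in> carrier R" and b: "b \<in> carrier R"
  shows "(a \<oplus> b) [^] (n::nat) = (\<Oplus>k\<in>{..n}. add_pow R (n choose k) (a [^] k \<otimes> b [^] (n - k)))"
proof (induction n)
  case 0
  then show ?case using a b by simp
next
  case (Suc n)
  define c where "c = (\<lambda>m k. add_pow R (m choose k) (a [^] k \<otimes> b [^] (m - k)))"
  have c_carrier: "c m k \<in> carrier R" for m k
    unfolding c_def using a b by simp
  have "(\<Oplus>k\<in>{..Suc n}. c (Suc n) k) = (\<Oplus>k\<in>{..n}. c (Suc n) (Suc k)) \<oplus> c (Suc n) 0"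
    by (rule finsum_Suc2) (use c_carrier in auto)
  also have "\<dots> = (\<Oplus>k\<in>{..n}. a \<otimes> c n k \<oplus> b \<otimes> c n (Suc k)) \<oplus> b \<otimes> c n 0"
  proof -
    have "c (Suc n) 0 = b \<otimes> c n 0"
      using b by (simp add: c_def add_pow_rdistr m_ac)
    moreover have "(\<Oplus>k\<in>{..n}. c (Suc n) (Suc k)) = (\<Oplus>k\<in>{..n}. a \<otimes> c n k \<oplus> b \<otimes> c n (Suc k))"
      by (rule finsum_cong') (use a b c_carrier binomial_pascal in \<open>auto simp: c_def\<close>)
    ultimately show ?thesis by simp
  qed
  also have "\<dots> = a \<otimes> (\<Oplus>k\<in>{..n}. c n k) \<oplus> b \<otimes> ((\<Oplus>k\<in>{..n}. c n (Suc k)) \<oplus> c n 0)"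
    using a b c_carrier by (simp add: finsum_addf finsum_rdistr r_distr a_ac)
  also have "(\<Oplus>k\<in>{..n}. c n (Suc k)) \<oplus> c n 0 = (\<Oplus>k\<in>{..n}. c n k)"
  proof -
    have "c n (Suc n) = \<zero>"
      by (simp add: c_def binomial_eq_0)
    then have "(\<Oplus>k\<in>{..Suc n}. c n k) = (\<Oplus>k\<in>{..n}. c n k)"
      using c_carrier by (simp add: finsum_Suc)
    then show ?thesis
      using c_carrier finsum_Suc2[of "c n" n] by simp
  qed
  finally have "(\<Oplus>k\<in>{..Suc n}. c (Suc n) k) = (a \<oplus> b) \<otimes> (\<Oplus>k\<in>{..n}. c n k)"
    using a b c_carrier by (simp add: l_distr del: finsum_Suc)
  then show ?case
    using Suc a b by (simp add: c_def m_comm del: finsum_Suc)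
qed

lemma (in cring) freshmans_dream:
  assumes p: "Factorial_Ring.prime (p::nat)" and char: "add_pow R p \<one> = \<zero>"
    and a: "a \<in> carrier R" and b: "b \<in> carrier R"
  shows "(a \<oplus> b) [^] p = a [^] p \<oplus> b [^] p"
proof -
  define c where "c = (\<lambda>k. add_pow R (p choose k) (a [^] k \<otimes> b [^] (p - k)))"
  have c_carrier: "c k \<in> carrier R" for k
    unfolding c_def using a b by simp
  have c_vanishes: "c k = \<zero>" if k: "0 < k" "k < p" for k
  proof -
    obtain d where d: "p choose k = p * d"
      using dvd_choose_prime[of k p] k p by (auto elim: dvdE)
    have "c k = add_pow R d (add_pow R p \<one> \<otimes> (a [^] k \<otimes> b [^] (p - k)))"
      using a b by (simp add: c_def d mult.commute[of p] add.nat_pow_pow add_pow_ldistr)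
    then show ?thesis
      using a b char by simp
  qed
  obtain m where m: "p = Suc (Suc m)"
    using prime_ge_2_nat[OF p] by (metis add_2_eq_Suc le_iff_add)
  have "(a \<oplus> b) [^] p = (\<Oplus>k\<in>{..Suc (Suc m)}. c k)"
    unfolding c_def m by (rule binomial_ring[OF a b])
  also have "\<dots> = c (Suc (Suc m)) \<oplus> (\<Oplus>k\<in>{..Suc m}. c k)"
    by (rule finsum_Suc) (use c_carrier in auto)
  also have "(\<Oplus>k\<in>{..Suc m}. c k) = (\<Oplus>k\<in>{..m}. c (Suc k)) \<oplus> c 0"
    by (rule finsum_Suc2) (use c_carrier in auto)
  also have "(\<Oplus>k\<in>{..m}. c (Suc k)) = \<zero>"
  proof -
    have "(\<Oplus>k\<in>{..m}. c (Suc k)) = (\<Oplus>k\<in>{..m}. \<zero>)"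
      by (rule finsum_cong') (use c_vanishes m in auto)
    then show ?thesis by simp
  qed
  finally show ?thesis
    using a b m by (simp add: c_def)
qed

lemma frobenius_factor_ring_hom:
  assumes A: "cring A" and B: "cring B"
    and p: "Factorial_Ring.prime (p::nat)" and char: "add_pow B p \<one>\<^bsub>B\<^esub> = \<zero>\<^bsub>B\<^esub>"
    and T: "T \<in> ring_hom A B" and T_inj: "inj_on T (carrier A)"
    and F_carrier: "\<And>y. y \<in> carrier B \<Longrightarrow> F y \<in> carrier A"
    and T_F: "\<And>y. y \<in> carrier B \<Longrightarrow> T (F y) = y [^]\<^bsub>B\<^esub> p"
  shows "F \<in> ring_hom B A"
proof -
  interpret ring_hom_cring A B T
    using A B T by (simp add: ring_hom_cring_def ring_hom_cring_axioms_def)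
  have F_eq: "F y = a" if "y \<in> carrier B" "a \<in> carrier A" "T a = y [^]\<^bsub>B\<^esub> p" for y a
    using inj_onD[OF T_inj] that F_carrier T_F by metis
  show ?thesis
  proof (rule ring_hom_memI)
    fix x y assume x: "x \<in> carrier B" and y: "y \<in> carrier B"
    show "F (x \<otimes>\<^bsub>B\<^esub> y) = F x \<otimes>\<^bsub>A\<^esub> F y"
      using x y F_carrier T_F by (intro F_eq) (simp_all add: S.nat_pow_distrib)
    show "F (x \<oplus>\<^bsub>B\<^esub> y) = F x \<oplus>\<^bsub>A\<^esub> F y"
      using x y F_carrier T_F by (intro F_eq) (simp_all add: S.freshmans_dream[OF p char])
  qed (auto intro: F_carrier F_eq)
qed

section \<open>Cosets, quotients and principal ideals\<close>

lemma (in ring_hom_ring) hom_add_pow: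
  "x \<in> carrier R \<Longrightarrow> h (add_pow R (n::nat) x) = add_pow S n (h x)"
  using group_hom.hom_nat_pow[OF a_group_hom] by (simp add: add_pow_def)

lemma carrier_FactRing: "carrier (R Quot I) = (\<lambda>x. I +>\<^bsub>R\<^esub> x) ` carrier R"
  unfolding FactRing_def A_RCOSETS_def RCOSETS_def a_r_coset_def by auto

lemma mem_a_r_coset_iff: "y \<in> H +>\<^bsub>G\<^esub> a \<longleftrightarrow> (\<exists>h\<in>H. y = h \<oplus>\<^bsub>G\<^esub> a)"
  unfolding a_r_coset_def' by blast

lemma mem_set_add_iff: "y \<in> H <+>\<^bsub>G\<^esub> K \<longleftrightarrow> (\<exists>h\<in>H. \<exists>k\<in>K. y = h \<oplus>\<^bsub>G\<^esub> k)"
  unfolding set_add_def' by blast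

lemma induced_ring_hom:
  assumes \<pi>: "\<pi> \<in> ring_hom R B" and surj: "\<pi> ` carrier R = carrier B"
    and \<psi>: "\<psi> \<in> ring_hom R C" and factor: "\<And>x. x \<in> carrier R \<Longrightarrow> \<phi> (\<pi> x) = \<psi> x"
    and R: "ring R"
  shows "\<phi> \<in> ring_hom B C"
proof (rule ring_hom_memI)
  fix a assume "a \<in> carrier B"
  then obtain x where "x \<in> carrier R" "a = \<pi> x"
    using surj by blast
  then show "\<phi> a \<in> carrier C"
    using factor ring_hom_closed[OF \<psi>] by simp
next
  fix a b assume "a \<in> carrier B" "b \<in> carrier B"
  then obtain x y where x: "x \<in> carrier R" "a = \<pi> x" and y: "y \<in> carrier R" "b = \<pi> y"
    using surj by blast
  show "\<phi> (a \<otimes>\<^bsub>B\<^esub> b) = \<phi> a \<otimes>\<^bsub>C\<^esub> \<phi> b"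
    using x y factor R by (simp flip: ring_hom_mult[OF \<pi>] add: ring_hom_mult[OF \<psi>] ring.ring_simprules)
  show "\<phi> (a \<oplus>\<^bsub>B\<^esub> b) = \<phi> a \<oplus>\<^bsub>C\<^esub> \<phi> b"
    using x y factor R by (simp flip: ring_hom_add[OF \<pi>] add: ring_hom_add[OF \<psi>] ring.ring_simprules)
next
  show "\<phi> \<one>\<^bsub>B\<^esub> = \<one>\<^bsub>C\<^esub>"
    using factor R by (simp flip: ring_hom_one[OF \<pi>] add: ring_hom_one[OF \<psi>] ring.ring_simprules)
qed

lemma (in cring) ideal_prod_cgenideal:
  assumes "a \<in> carrier R" "b \<in> carrier R"
  shows "(PIdl a) \<cdot> (PIdl b) = PIdl (a \<otimes> b)"
proof -
  have ideal: "ideal (PIdl (a \<otimes> b)) R"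
    using assms by (simp add: cgenideal_ideal)
  have "(PIdl a) \<cdot> (PIdl b) = Idl (PIdl (a \<otimes> b))"
    using assms ideal_prod_eq_genideal cgenideal_ideal cgenideal_prod by simp
  also have "\<dots> = PIdl (a \<otimes> b)"
    using genideal_minimal[OF ideal subset_refl] genideal_self ideal.Icarr[OF ideal]
    by (meson subsetI subset_antisym)
  finally show ?thesis .
qed

lemma (in cring) cgenideal_pow:
  assumes "a \<in> carrier R"
  shows "PIdl a [^]\<^bsub>ideals_set R\<^esub> (n::nat) = PIdl (a [^] n)"
proof (induction n)
  case 0
  have "PIdl \<one> = carrier R"
    unfolding cgenideal_def by force
  then show ?case by (simp add: ideals_set_def)
next
  case (Suc n)
  then show ?case
    using assms by (simp add: ideals_set_def ideal_prod_cgenideal)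
qed

lemma (in ring_hom_cring) genideal_image_cgenideal:
  assumes a: "a \<in> carrier R"
  shows "Idl\<^bsub>S\<^esub> (h ` (PIdl\<^bsub>R\<^esub> a)) = PIdl\<^bsub>S\<^esub> (h a)"
proof
  have "h ` (PIdl\<^bsub>R\<^esub> a) \<subseteq> PIdl\<^bsub>S\<^esub> (h a)"
    using a unfolding cgenideal_def by auto
  then show "Idl\<^bsub>S\<^esub> (h ` (PIdl\<^bsub>R\<^esub> a)) \<subseteq> PIdl\<^bsub>S\<^esub> (h a)"
    using a by (simp add: S.genideal_minimal S.cgenideal_ideal)
  have image_carrier: "h ` (PIdl\<^bsub>R\<^esub> a) \<subseteq> carrier S"
    using a unfolding cgenideal_def by auto
  have "h a \<in> Idl\<^bsub>S\<^esub> (h ` (PIdl\<^bsub>R\<^esub> a))"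
    using a R.cgenideal_self S.genideal_self[OF image_carrier] by blast
  then show "PIdl\<^bsub>S\<^esub> (h a) \<subseteq> Idl\<^bsub>S\<^esub> (h ` (PIdl\<^bsub>R\<^esub> a))"
    by (simp add: S.cgenideal_minimal S.genideal_ideal[OF image_carrier])
qed

lemma (in ring_hom_cring) surj_image_cgenideal:
  assumes a: "a \<in> carrier R" and surj: "h ` carrier R = carrier S"
  shows "h ` (PIdl\<^bsub>R\<^esub> a) = PIdl\<^bsub>S\<^esub> (h a)"
proof -
  have "h ` (PIdl\<^bsub>R\<^esub> a) = (\<lambda>y. y \<otimes>\<^bsub>S\<^esub> h a) ` h ` carrier R"
    using a unfolding cgenideal_def by (force simp flip: hom_mult)
  then show ?thesis
    unfolding surj cgenideal_def by auto
qed

lemma frob_quot_kernel_coset: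
  assumes h: "ring_hom_ring L A h" and g: "ring_hom_ring L C g"
    and g_pow: "\<And>x. x \<in> carrier L \<Longrightarrow> g (x [^]\<^bsub>L\<^esub> (p::nat)) = \<tau> (h x)"
    and x: "x \<in> carrier L"
  shows "frob_quot L p (a_kernel L C g) (a_kernel L A h +>\<^bsub>L\<^esub> x) = {z \<in> carrier L. g z = \<tau> (h x)}"
proof -
  interpret h: ring_hom_ring L A h by (rule h)
  interpret g: ring_hom_ring L C g by (rule g)
  have coset_pow: "a_kernel L C g +>\<^bsub>L\<^esub> y [^]\<^bsub>L\<^esub> p = {z \<in> carrier L. g z = \<tau> (h x)}"
    if "y \<in> a_kernel L A h +>\<^bsub>L\<^esub> x" for y
  proof -
    have "y \<in> carrier L" "h y = h x"
      using that x by (simp_all add: h.rcos_eq_homeq)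
    then show ?thesis
      by (simp add: g.rcos_eq_homeq g_pow)
  qed
  have "x \<in> a_kernel L A h +>\<^bsub>L\<^esub> x"
    using x by (simp add: h.rcos_eq_homeq)
  then have "(\<lambda>y. a_kernel L C g +>\<^bsub>L\<^esub> y [^]\<^bsub>L\<^esub> p) ` (a_kernel L A h +>\<^bsub>L\<^esub> x)
      = {{z \<in> carrier L. g z = \<tau> (h x)}}"
    using coset_pow by auto
  then show ?thesis
    unfolding frob_quot_def by simp
qed

lemma frob_quot_kernel_inj:
  assumes h: "ring_hom_ring L A h" and g: "ring_hom_ring L C g"
    and \<tau>_inj: "inj_on \<tau> (carrier A)"
    and g_pow: "\<And>x. x \<in> carrier L \<Longrightarrow> g (x [^]\<^bsub>L\<^esub> (p::nat)) = \<tau> (h x)"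
  shows "inj_on (frob_quot L p (a_kernel L C g)) (carrier (L Quot a_kernel L A h))"
proof (rule inj_onI)
  interpret h: ring_hom_ring L A h by (rule h)
  fix U V
  assume "U \<in> carrier (L Quot a_kernel L A h)" "V \<in> carrier (L Quot a_kernel L A h)"
  then obtain x y where x: "x \<in> carrier L" "U = a_kernel L A h +>\<^bsub>L\<^esub> x"
    and y: "y \<in> carrier L" "V = a_kernel L A h +>\<^bsub>L\<^esub> y"
    unfolding carrier_FactRing by auto
  assume "frob_quot L p (a_kernel L C g) U = frob_quot L p (a_kernel L C g) V"
  then have "{z \<in> carrier L. g z = \<tau> (h x)} = {z \<in> carrier L. g z = \<tau> (h y)}"
    using x y frob_quot_kernel_coset[OF h g g_pow] by simp
  moreover have "x [^]\<^bsub>L\<^esub> p \<in> {z \<in> carrier L. g z = \<tau> (h x)}"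
    using x(1) g_pow by simp
  ultimately have "\<tau> (h x) = \<tau> (h y)"
    using x(1) g_pow by simp
  then have "h x = h y"
    using x(1) y(1) inj_onD[OF \<tau>_inj] by simp
  then show "U = V"
    using x y by (simp add: h.rcos_eq_homeq)
qed

section \<open>Inverse limits of rings\<close>

definition inverse_limit_ring ::
  "(nat \<Rightarrow> ('a, 'm) ring_scheme) \<Rightarrow> (nat \<Rightarrow> 'a \<Rightarrow> 'a) \<Rightarrow> (nat \<Rightarrow> 'a) ring" where
  "inverse_limit_ring A f =
     \<lparr> carrier = {x. \<forall>i. x i \<in> carrier (A i) \<and> f i (x (Suc i)) = x i},
       monoid.mult = (\<lambda>x y i. x i \<otimes>\<^bsub>A i\<^esub> y i),
       one = (\<lambda>i. \<one>\<^bsub>A i\<^esub>),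
       ring.zero = (\<lambda>i. \<zero>\<^bsub>A i\<^esub>),
       ring.add = (\<lambda>x y i. x i \<oplus>\<^bsub>A i\<^esub> y i) \<rparr>"

locale ring_inverse_system =
  fixes A :: "nat \<Rightarrow> ('a, 'm) ring_scheme" and f :: "nat \<Rightarrow> 'a \<Rightarrow> 'a"
  assumes cring: "cring (A i)" and hom: "f i \<in> ring_hom (A (Suc i)) (A i)"
begin

abbreviation Lim where "Lim \<equiv> inverse_limit_ring A f"

lemma ring: "ring (A i)"
  using cring by (rule cring.axioms(1))

lemma f_hom_ring: "ring_hom_ring (A (Suc i)) (A i) (f i)"
  by (rule ring_hom_ringI2[OF ring ring hom])

lemma f_zero: "f i \<zero>\<^bsub>A (Suc i)\<^esub> = \<zero>\<^bsub>A i\<^esub>"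
proof -
  interpret ring_hom_ring "A (Suc i)" "A i" "f i" by (rule f_hom_ring)
  show ?thesis by simp
qed

lemma f_a_inv: "x \<in> carrier (A (Suc i)) \<Longrightarrow> f i (\<ominus>\<^bsub>A (Suc i)\<^esub> x) = \<ominus>\<^bsub>A i\<^esub> f i x"
proof -
  interpret ring_hom_ring "A (Suc i)" "A i" "f i" by (rule f_hom_ring)
  show "x \<in> carrier (A (Suc i)) \<Longrightarrow> ?thesis" by simp
qed

lemma mem_Lim: "x \<in> carrier Lim \<longleftrightarrow> (\<forall>i. x i \<in> carrier (A i) \<and> f i (x (Suc i)) = x i)"
  by (simp add: inverse_limit_ring_def)

lemma Lim_simps:
  "x \<otimes>\<^bsub>Lim\<^esub> y = (\<lambda>i. x i \<otimes>\<^bsub>A i\<^esub> y i)" "x \<oplus>\<^bsub>Lim\<^esub> y = (\<lambda>i. x i \<oplus>\<^bsub>A i\<^esub> y i)"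
  "\<one>\<^bsub>Lim\<^esub> = (\<lambda>i. \<one>\<^bsub>A i\<^esub>)" "\<zero>\<^bsub>Lim\<^esub> = (\<lambda>i. \<zero>\<^bsub>A i\<^esub>)"
  by (simp_all add: inverse_limit_ring_def)

lemma Lim_carrierI:
  "(\<And>i. x i \<in> carrier (A i)) \<Longrightarrow> (\<And>i. f i (x (Suc i)) = x i) \<Longrightarrow> x \<in> carrier Lim"
  by (simp add: mem_Lim)

lemma Lim_carrierD:
  assumes "x \<in> carrier Lim"
  shows "x i \<in> carrier (A i)" and "f i (x (Suc i)) = x i"
  using assms by (simp_all add: mem_Lim)

lemma cring_Lim: "cring Lim"
proof (rule cringI)
  note simps = Lim_carrierD Lim_simps fun_eq_iff ring.ring_simprules[OF ring]
    ring_hom_add[OF hom] ring_hom_mult[OF hom] ring_hom_one[OF hom] f_zero f_a_inv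
  show "abelian_group Lim"
  proof (rule abelian_groupI)
    fix x assume "x \<in> carrier Lim"
    then have "(\<lambda>i. \<ominus>\<^bsub>A i\<^esub> x i) \<in> carrier Lim \<and> (\<lambda>i. \<ominus>\<^bsub>A i\<^esub> x i) \<oplus>\<^bsub>Lim\<^esub> x = \<zero>\<^bsub>Lim\<^esub>"
      by (auto intro!: Lim_carrierI simp: simps)
    then show "\<exists>y\<in>carrier Lim. y \<oplus>\<^bsub>Lim\<^esub> x = \<zero>\<^bsub>Lim\<^esub>" by blast
  qed (auto intro!: Lim_carrierI simp: simps)
  show "comm_monoid Lim"
  proof (rule comm_monoidI)
    fix x y assume "x \<in> carrier Lim" "y \<in> carrier Lim"
    then show "x \<otimes>\<^bsub>Lim\<^esub> y = y \<otimes>\<^bsub>Lim\<^esub> x"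
      by (simp add: Lim_carrierD Lim_simps fun_eq_iff cring.cring_simprules(14)[OF cring])
  qed (auto intro!: Lim_carrierI simp: simps)
next
  fix x y z assume "x \<in> carrier Lim" "y \<in> carrier Lim" "z \<in> carrier Lim"
  then show "(x \<oplus>\<^bsub>Lim\<^esub> y) \<otimes>\<^bsub>Lim\<^esub> z = x \<otimes>\<^bsub>Lim\<^esub> z \<oplus>\<^bsub>Lim\<^esub> y \<otimes>\<^bsub>Lim\<^esub> z"
    by (simp add: Lim_carrierD Lim_simps ring.ring_simprules(13)[OF ring])
qed

lemma Lim_nat_pow: "x [^]\<^bsub>Lim\<^esub> (n::nat) = (\<lambda>i. x i [^]\<^bsub>A i\<^esub> n)"
  by (induction n) (simp_all add: Lim_simps)

lemma proj_hom_ring: "ring_hom_ring Lim (A i) (\<lambda>x. x i)"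
  by (rule ring_hom_ringI) (auto simp: cring_Lim cring.axioms(1) ring mem_Lim Lim_simps)

primrec transition :: "nat \<Rightarrow> nat \<Rightarrow> 'a \<Rightarrow> 'a" where
  "transition k 0 = (\<lambda>x. x)"
| "transition k (Suc j) = transition k j \<circ> f (k + j)"

lemma transition_hom: "transition k j \<in> ring_hom (A (k + j)) (A k)"
proof (induction j)
  case 0
  show ?case using id_ring_hom by (simp add: id_def)
next
  case (Suc j)
  show ?case using ring_hom_trans[OF hom Suc] by (simp add: comp_def)
qed

lemma transition_hom_ring: "ring_hom_ring (A (k + j)) (A k) (transition k j)"
  by (rule ring_hom_ringI2[OF ring ring transition_hom])

lemma transition_Lim: "x \<in> carrier Lim \<Longrightarrow> transition k j (x (k + j)) = x k"
  by (induction j) (simp_all add: Lim_carrierD)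

lemma f_transition: "f k (transition (Suc k) j y) = transition k (Suc j) y"
  by (induction j arbitrary: y) simp_all

end

section \<open>Frobenius towers\<close>

lemma power_add_power_le:
  assumes "1 < (p::nat)" "i < j"
  shows "p ^ k + p ^ i \<le> p ^ (k + j)"
proof -
  have "p ^ k \<le> p ^ (k + j - 1)" "p ^ i \<le> p ^ (k + j - 1)"
    using assms by (simp_all add: power_increasing)
  then have "p ^ k + p ^ i \<le> 2 * p ^ (k + j - 1)"
    by simp
  also have "\<dots> \<le> p * p ^ (k + j - 1)"
    using assms(1) by simp
  also have "\<dots> = p ^ (k + j)"
    using assms(2) by (simp flip: power_Suc)
  finally show ?thesis .
qed

text \<open>
  B, T and F stand for the quotients R_i / I0 R_i, the induced maps and the maps F_i of a
  preperfectoid tower; u i is the image in B (i+1) of a generator of I_1.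
\<close>

locale frobenius_tower = ring_inverse_system B F
  for B :: "nat \<Rightarrow> ('a, 'm) ring_scheme" and F +
  fixes p :: nat and T :: "nat \<Rightarrow> 'a \<Rightarrow> 'a" and u :: "nat \<Rightarrow> 'a"
  assumes p_gt_1: "1 < p"
    and T_hom: "T i \<in> ring_hom (B i) (B (Suc i))"
    and T_inj: "inj_on (T i) (carrier (B i))"
    and T_F: "z \<in> carrier (B (Suc i)) \<Longrightarrow> T i (F i z) = z [^]\<^bsub>B (Suc i)\<^esub> p"
    and F_surj: "F i ` carrier (B (Suc i)) = carrier (B i)"
    and u_carrier: "u i \<in> carrier (B (Suc i))"
    and kernel_F: "a_kernel (B (Suc i)) (B i) (F i) = PIdl\<^bsub>B (Suc i)\<^esub> (u i)"
    and T_u: "T (Suc i) (u i) = u (Suc i)"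
begin

lemma T_hom_ring: "ring_hom_ring (B i) (B (Suc i)) (T i)"
  by (rule ring_hom_ringI2[OF ring ring T_hom])

lemma T_Lim: "x \<in> carrier Lim \<Longrightarrow> T i (x i) = x (Suc i) [^]\<^bsub>B (Suc i)\<^esub> p"
  using T_F[of "x (Suc i)" i] by (simp add: Lim_carrierD)

lemma Lim_pow_Suc:
  assumes x: "x \<in> carrier Lim"
  shows "x (Suc k) [^]\<^bsub>B (Suc k)\<^esub> (p * e) = T k (x k [^]\<^bsub>B k\<^esub> (e::nat))"
proof -
  interpret T: ring_hom_ring "B k" "B (Suc k)" "T k" by (rule T_hom_ring)
  have "x (Suc k) [^]\<^bsub>B (Suc k)\<^esub> (p * e) = (x (Suc k) [^]\<^bsub>B (Suc k)\<^esub> p) [^]\<^bsub>B (Suc k)\<^esub> e"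
    using x by (simp add: Lim_carrierD T.S.nat_pow_pow)
  also have "\<dots> = T k (x k [^]\<^bsub>B k\<^esub> e)"
    using x by (simp add: T_Lim Lim_carrierD T.hom_nat_pow)
  finally show ?thesis .
qed

lemma Lim_nilpotent:
  assumes x: "x \<in> carrier Lim" and x0: "x 0 = \<zero>\<^bsub>B 0\<^esub>"
  shows "x k [^]\<^bsub>B k\<^esub> (p ^ k) = \<zero>\<^bsub>B k\<^esub>"
proof (induction k)
  case 0
  show ?case using x0 ring by (simp add: ring.ring_simprules)
next
  case (Suc k)
  interpret T: ring_hom_ring "B k" "B (Suc k)" "T k" by (rule T_hom_ring)
  show ?case
    using Suc by (simp add: Lim_pow_Suc[OF x])
qed

lemma exists_generator: "\<exists>w\<in>carrier Lim. w 0 = \<zero>\<^bsub>B 0\<^esub> \<and> w 1 = u 0"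
proof -
  have "\<exists>v. \<forall>n. (v n \<in> carrier (B (Suc n)) \<and> (n = 0 \<longrightarrow> v n = u 0)) \<and> F (Suc n) (v (Suc n)) = v n"
  proof (rule dependent_nat_choice)
    fix x n assume "x \<in> carrier (B (Suc n)) \<and> (n = 0 \<longrightarrow> x = u 0)"
    then show "\<exists>y. (y \<in> carrier (B (Suc (Suc n))) \<and> (Suc n = 0 \<longrightarrow> y = u 0)) \<and> F (Suc n) y = x"
      using F_surj[of "Suc n"] by force
  qed (use u_carrier in blast)
  then obtain v where v: "\<And>n. v n \<in> carrier (B (Suc n))" "v 0 = u 0" "\<And>n. F (Suc n) (v (Suc n)) = v n"
    by blast
  have "F 0 (u 0) = \<zero>\<^bsub>B 0\<^esub>"
    using kernel_F[of 0] ring.cgenideal_self[OF ring u_carrier] u_carrier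
    by (auto simp: a_kernel_def')
  then have "case_nat \<zero>\<^bsub>B 0\<^esub> v \<in> carrier Lim"
    using v ring.ring_simprules(2)[OF ring] by (intro Lim_carrierI) (auto split: nat.split)
  then show ?thesis
    using v(2) by (intro bexI[of _ "case_nat \<zero>\<^bsub>B 0\<^esub> v"]) simp_all
qed

end

locale frobenius_tower_generator = frobenius_tower +
  fixes w :: "nat \<Rightarrow> 'a"
  assumes w_carrier: "w \<in> carrier Lim" and w_0: "w 0 = \<zero>\<^bsub>B 0\<^esub>" and w_1: "w 1 = u 0"
begin

lemma w_level: "w n \<in> carrier (B n)"
  using w_carrier by (rule Lim_carrierD)

lemma w_pow_eq_u: "w (Suc n) [^]\<^bsub>B (Suc n)\<^esub> (p ^ n) = u n"
proof (induction n)
  case 0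
  show ?case using w_1 u_carrier ring by (simp add: ring.ring_simprules)
next
  case (Suc n)
  then show ?case
    using T_u by (simp add: Lim_pow_Suc[OF w_carrier])
qed

lemma kernel_F_w: "a_kernel (B (Suc n)) (B n) (F n) = PIdl\<^bsub>B (Suc n)\<^esub> (w (Suc n) [^]\<^bsub>B (Suc n)\<^esub> (p ^ n))"
  using kernel_F w_pow_eq_u by simp

lemma w_nilpotent: "w k [^]\<^bsub>B k\<^esub> (p ^ k) = \<zero>\<^bsub>B k\<^esub>"
  using w_carrier w_0 by (rule Lim_nilpotent)

lemma transition_w_pow:
  assumes "p ^ k \<le> e"
  shows "transition k j (w (k + j) [^]\<^bsub>B (k + j)\<^esub> e) = \<zero>\<^bsub>B k\<^esub>"
proof -
  interpret \<phi>: ring_hom_ring "B (k + j)" "B k" "transition k j" by (rule transition_hom_ring)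
  have "transition k j (w (k + j) [^]\<^bsub>B (k + j)\<^esub> e) = w k [^]\<^bsub>B k\<^esub> (p ^ k + (e - p ^ k))"
    using assms w_level by (simp add: \<phi>.hom_nat_pow transition_Lim[OF w_carrier])
  also have "\<dots> = \<zero>\<^bsub>B k\<^esub>"
    using w_level by (simp add: \<phi>.S.nat_pow_mult[symmetric] w_nilpotent)
  finally show ?thesis .
qed

definition cofactors :: "(nat \<Rightarrow> 'a) \<Rightarrow> nat \<Rightarrow> nat \<Rightarrow> 'a set" where
  "cofactors x i n = {h \<in> carrier (B n). h \<otimes>\<^bsub>B n\<^esub> w n [^]\<^bsub>B n\<^esub> (p ^ i) = x n}"

lemma F_cofactors:
  assumes x: "x \<in> carrier Lim" and h: "h \<in> cofactors x i (Suc n)"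
  shows "F n h \<in> cofactors x i n"
proof -
  interpret F: ring_hom_ring "B (Suc n)" "B n" "F n" by (rule f_hom_ring)
  have hc: "h \<in> carrier (B (Suc n))"
    and he: "h \<otimes>\<^bsub>B (Suc n)\<^esub> w (Suc n) [^]\<^bsub>B (Suc n)\<^esub> (p ^ i) = x (Suc n)"
    using h unfolding cofactors_def by auto
  have "F n h \<otimes>\<^bsub>B n\<^esub> w n [^]\<^bsub>B n\<^esub> (p ^ i)
      = F n (h \<otimes>\<^bsub>B (Suc n)\<^esub> w (Suc n) [^]\<^bsub>B (Suc n)\<^esub> (p ^ i))"
    using hc w_level by (simp add: F.hom_nat_pow Lim_carrierD(2)[OF w_carrier])
  also have "\<dots> = x n"
    using he x by (simp add: Lim_carrierD(2))
  finally show ?thesis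
    using hc unfolding cofactors_def by simp
qed

lemma transition_cofactors:
  "x \<in> carrier Lim \<Longrightarrow> h \<in> cofactors x i (k + j) \<Longrightarrow> transition k j h \<in> cofactors x i k"
  by (induction j arbitrary: h) (simp_all add: F_cofactors)

lemma cofactors_nonempty:
  assumes x: "x \<in> carrier Lim" and xi: "x i = \<zero>\<^bsub>B i\<^esub>"
  shows "cofactors x i (Suc i) \<noteq> {}"
proof -
  have "x (Suc i) \<in> a_kernel (B (Suc i)) (B i) (F i)"
    using x xi by (simp add: a_kernel_def' Lim_carrierD)
  then obtain y where "y \<in> carrier (B (Suc i))"
      "x (Suc i) = y \<otimes>\<^bsub>B (Suc i)\<^esub> w (Suc i) [^]\<^bsub>B (Suc i)\<^esub> (p ^ i)"
    unfolding kernel_F_w cgenideal_def by blast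
  then show ?thesis
    unfolding cofactors_def by auto
qed

text \<open>
  A preimage h0 of a cofactor fails to be a cofactor only by an element of
  ker F_n = (w_(n+1)^(p^n)); since p^i <= p^n this error is a multiple of w_(n+1)^(p^i) and is
  removed by subtracting a multiple of w_(n+1)^(p^n - p^i) from h0.
\<close>

lemma cofactor_correction:
  assumes x: "x \<in> carrier Lim" and i: "i \<le> n" and h0: "h0 \<in> carrier (B (Suc n))"
    and F_h0: "F n h0 \<in> cofactors x i n"
  shows "\<exists>z\<in>carrier (B (Suc n)).
           h0 \<ominus>\<^bsub>B (Suc n)\<^esub> z \<otimes>\<^bsub>B (Suc n)\<^esub> w (Suc n) [^]\<^bsub>B (Suc n)\<^esub> (p ^ n - p ^ i)
             \<in> cofactors x i (Suc n)"
proof -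
  interpret F: ring_hom_cring "B (Suc n)" "B n" "F n"
    using cring hom by (simp add: ring_hom_cring_def ring_hom_cring_axioms_def)
  define W where "W = w (Suc n) [^]\<^bsub>B (Suc n)\<^esub> (p ^ i)"
  define c where "c = w (Suc n) [^]\<^bsub>B (Suc n)\<^esub> (p ^ n - p ^ i)"
  have W: "W \<in> carrier (B (Suc n))" and c: "c \<in> carrier (B (Suc n))"
    using w_level unfolding W_def c_def by simp_all
  have xc: "x (Suc n) \<in> carrier (B (Suc n))"
    using x by (rule Lim_carrierD)
  have "F n (h0 \<otimes>\<^bsub>B (Suc n)\<^esub> W \<ominus>\<^bsub>B (Suc n)\<^esub> x (Suc n)) = \<zero>\<^bsub>B n\<^esub>"
    using F_h0 h0 W xc w_level Lim_carrierD[OF x] unfolding cofactors_def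
    by (simp add: W_def Lim_carrierD w_carrier F.S.minus_eq F.S.r_neg)
  moreover have "h0 \<otimes>\<^bsub>B (Suc n)\<^esub> W \<ominus>\<^bsub>B (Suc n)\<^esub> x (Suc n) \<in> carrier (B (Suc n))"
    using h0 W xc by simp
  ultimately have "h0 \<otimes>\<^bsub>B (Suc n)\<^esub> W \<ominus>\<^bsub>B (Suc n)\<^esub> x (Suc n) \<in> a_kernel (B (Suc n)) (B n) (F n)"
    unfolding a_kernel_def' by blast
  then obtain z where z: "z \<in> carrier (B (Suc n))"
    "h0 \<otimes>\<^bsub>B (Suc n)\<^esub> W \<ominus>\<^bsub>B (Suc n)\<^esub> x (Suc n) = z \<otimes>\<^bsub>B (Suc n)\<^esub> w (Suc n) [^]\<^bsub>B (Suc n)\<^esub> (p ^ n)"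
    unfolding kernel_F_w cgenideal_def by blast
  have "p ^ i \<le> p ^ n"
    using i p_gt_1 by (simp add: power_increasing)
  then have "c \<otimes>\<^bsub>B (Suc n)\<^esub> W = w (Suc n) [^]\<^bsub>B (Suc n)\<^esub> (p ^ n)"
    using w_level by (simp add: c_def W_def F.R.nat_pow_mult)
  then have correction:
    "h0 \<otimes>\<^bsub>B (Suc n)\<^esub> W \<ominus>\<^bsub>B (Suc n)\<^esub> x (Suc n) = z \<otimes>\<^bsub>B (Suc n)\<^esub> c \<otimes>\<^bsub>B (Suc n)\<^esub> W"
    using z c W by (simp add: F.R.m_assoc)
  have "(h0 \<ominus>\<^bsub>B (Suc n)\<^esub> z \<otimes>\<^bsub>B (Suc n)\<^esub> c) \<otimes>\<^bsub>B (Suc n)\<^esub> W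
      = h0 \<otimes>\<^bsub>B (Suc n)\<^esub> W \<ominus>\<^bsub>B (Suc n)\<^esub> z \<otimes>\<^bsub>B (Suc n)\<^esub> c \<otimes>\<^bsub>B (Suc n)\<^esub> W"
    using h0 z c W by (simp add: F.R.minus_eq F.R.l_distr F.R.l_minus)
  also have "\<dots> = x (Suc n)"
    unfolding correction[symmetric] using h0 W xc
    by (simp add: F.R.minus_eq F.R.minus_add F.R.a_assoc[symmetric] F.R.r_neg)
  finally show ?thesis
    using h0 z c unfolding cofactors_def W_def c_def by auto
qed

lemma cofactor_lift:
  assumes x: "x \<in> carrier Lim" and h: "h \<in> cofactors x i n" and i: "i \<le> n"
  shows "\<exists>h'\<in>cofactors x i (Suc n). \<exists>z\<in>carrier (B n).
           F n h' = h \<ominus>\<^bsub>B n\<^esub> z \<otimes>\<^bsub>B n\<^esub> w n [^]\<^bsub>B n\<^esub> (p ^ n - p ^ i)"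
proof -
  interpret F: ring_hom_cring "B (Suc n)" "B n" "F n"
    using cring hom by (simp add: ring_hom_cring_def ring_hom_cring_axioms_def)
  have "h \<in> F n ` carrier (B (Suc n))"
    using h F_surj[of n] unfolding cofactors_def by simp
  then obtain h0 where h0: "h0 \<in> carrier (B (Suc n))" "F n h0 = h"
    by (metis imageE)
  then obtain z where z: "z \<in> carrier (B (Suc n))"
    and h': "h0 \<ominus>\<^bsub>B (Suc n)\<^esub> z \<otimes>\<^bsub>B (Suc n)\<^esub> w (Suc n) [^]\<^bsub>B (Suc n)\<^esub> (p ^ n - p ^ i)
               \<in> cofactors x i (Suc n)"
    using cofactor_correction[OF x i] h by blast
  have "F n (h0 \<ominus>\<^bsub>B (Suc n)\<^esub> z \<otimes>\<^bsub>B (Suc n)\<^esub> w (Suc n) [^]\<^bsub>B (Suc n)\<^esub> (p ^ n - p ^ i))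
      = h \<ominus>\<^bsub>B n\<^esub> F n z \<otimes>\<^bsub>B n\<^esub> w n [^]\<^bsub>B n\<^esub> (p ^ n - p ^ i)"
    using h0 z w_level by (simp add: F.hom_pow Lim_carrierD(2)[OF w_carrier])
  then show ?thesis
    using h' z by blast
qed

lemma cofactor_lift_transition:
  assumes x: "x \<in> carrier Lim" and h: "h \<in> cofactors x i (k + j)" and ij: "i < j"
  shows "\<exists>h'\<in>cofactors x i (Suc (k + j)). F k (transition (Suc k) j h') = transition k j h"
proof -
  interpret \<phi>: ring_hom_ring "B (k + j)" "B k" "transition k j" by (rule transition_hom_ring)
  obtain h' z where h': "h' \<in> cofactors x i (Suc (k + j))" and z: "z \<in> carrier (B (k + j))"
    and Fh': "F (k + j) h' = h \<ominus>\<^bsub>B (k + j)\<^esub> z \<otimes>\<^bsub>B (k + j)\<^esub> w (k + j) [^]\<^bsub>B (k + j)\<^esub> (p ^ (k + j) - p ^ i)"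
    using cofactor_lift[OF x h] ij by auto
  have "p ^ k \<le> p ^ (k + j) - p ^ i"
    using power_add_power_le[OF p_gt_1 ij, of k] by simp
  then have "transition k j (w (k + j) [^]\<^bsub>B (k + j)\<^esub> (p ^ (k + j) - p ^ i)) = \<zero>\<^bsub>B k\<^esub>"
    by (rule transition_w_pow)
  then have "transition k j (F (k + j) h') = transition k j h"
    using h z w_level unfolding Fh' cofactors_def by (simp add: \<phi>.hom_a_inv a_minus_def)
  then show ?thesis
    using h' f_transition[of k j h'] by auto
qed

lemma divisible_by_w_pow:
  assumes x: "x \<in> carrier Lim" and xi: "x i = \<zero>\<^bsub>B i\<^esub>"
  shows "\<exists>y\<in>carrier Lim. x = y \<otimes>\<^bsub>Lim\<^esub> w [^]\<^bsub>Lim\<^esub> (p ^ i)"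
proof -
  let ?H = "\<lambda>k. transition k (Suc i) ` cofactors x i (k + Suc i)"
  have "\<exists>y. \<forall>k. y k \<in> ?H k \<and> F k (y (Suc k)) = y k"
  proof (rule dependent_nat_choice)
    show "\<exists>y. y \<in> ?H 0"
      using cofactors_nonempty[OF x xi] by simp
  next
    fix y k assume "y \<in> ?H k"
    then obtain h where h: "h \<in> cofactors x i (k + Suc i)" "y = transition k (Suc i) h"
      by blast
    then obtain h' where "h' \<in> cofactors x i (Suc k + Suc i)"
      "F k (transition (Suc k) (Suc i) h') = y"
      using cofactor_lift_transition[OF x h(1) lessI] by auto
    then show "\<exists>y'. y' \<in> ?H (Suc k) \<and> F k y' = y"
      by blast
  qed
  then obtain y where H: "\<And>k. y k \<in> ?H k" and compat: "\<And>k. F k (y (Suc k)) = y k"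
    by blast
  have cof: "y k \<in> cofactors x i k" for k
  proof -
    obtain h where h: "h \<in> cofactors x i (k + Suc i)" "y k = transition k (Suc i) h"
      using H[of k] by blast
    show ?thesis
      unfolding h(2) by (rule transition_cofactors[OF x h(1)])
  qed
  then have "y \<in> carrier Lim"
    using compat by (auto intro: Lim_carrierI simp: cofactors_def)
  moreover have "x = y \<otimes>\<^bsub>Lim\<^esub> w [^]\<^bsub>Lim\<^esub> (p ^ i)"
    using cof by (auto simp: Lim_simps Lim_nat_pow cofactors_def fun_eq_iff)
  ultimately show ?thesis by blast
qed

lemma kernel_proj_eq_cgenideal:
  "a_kernel Lim (B i) (\<lambda>x. x i) = PIdl\<^bsub>Lim\<^esub> (w [^]\<^bsub>Lim\<^esub> (p ^ i))"
proof -
  interpret Lim: cring Lim by (rule cring_Lim)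
  show ?thesis
  proof
    show "a_kernel Lim (B i) (\<lambda>x. x i) \<subseteq> PIdl\<^bsub>Lim\<^esub> (w [^]\<^bsub>Lim\<^esub> (p ^ i))"
      using divisible_by_w_pow unfolding a_kernel_def' cgenideal_def by blast
    have "(y \<otimes>\<^bsub>Lim\<^esub> w [^]\<^bsub>Lim\<^esub> (p ^ i)) i = \<zero>\<^bsub>B i\<^esub>" if "y \<in> carrier Lim" for y
      using that w_level ring
      by (simp add: Lim_simps Lim_nat_pow w_nilpotent Lim_carrierD ring.ring_simprules)
    then show "PIdl\<^bsub>Lim\<^esub> (w [^]\<^bsub>Lim\<^esub> (p ^ i)) \<subseteq> a_kernel Lim (B i) (\<lambda>x. x i)"
      using w_carrier unfolding a_kernel_def' cgenideal_def by auto
  qed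
qed

lemma kernel_proj_eq_pow:
  "a_kernel Lim (B i) (\<lambda>x. x i) = a_kernel Lim (B 0) (\<lambda>x. x 0) [^]\<^bsub>ideals_set Lim\<^esub> (p ^ i)"
proof -
  interpret Lim: cring Lim by (rule cring_Lim)
  show ?thesis
    using w_carrier by (simp add: kernel_proj_eq_cgenideal Lim.cgenideal_pow)
qed

end

context frobenius_tower
begin

theorem frob_quot_inj:
  "inj_on (frob_quot Lim p (a_kernel Lim (B 0) (\<lambda>x. x 0) [^]\<^bsub>ideals_set Lim\<^esub> (p ^ Suc i)))
     (carrier (Lim Quot a_kernel Lim (B 0) (\<lambda>x. x 0) [^]\<^bsub>ideals_set Lim\<^esub> (p ^ i)))"
proof -
  obtain w where "w \<in> carrier Lim" "w 0 = \<zero>\<^bsub>B 0\<^esub>" "w 1 = u 0"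
    using exists_generator by blast
  then interpret frobenius_tower_generator B F p T u w
    by unfold_locales
  show ?thesis
    unfolding kernel_proj_eq_pow[symmetric]
    by (rule frob_quot_kernel_inj[OF proj_hom_ring proj_hom_ring T_inj])
      (simp add: Lim_nat_pow T_Lim)
qed

end

section \<open>Quotient towers\<close>

lemma tower_map_ring_hom:
  assumes "\<And>i. t i \<in> ring_hom (R i) (R (Suc i))"
  shows "tower_map t m k \<in> ring_hom (R m) (R (m + k))"
proof (induction k)
  case 0
  show ?case using id_ring_hom by (simp add: id_def)
next
  case (Suc k)
  then show ?case using ring_hom_trans[OF Suc assms] by (simp add: comp_def)
qed

locale quotient_tower =
  fixes R :: "nat \<Rightarrow> 'a ring" and t :: "nat \<Rightarrow> 'a \<Rightarrow> 'a" and I0 :: "'a set"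
  assumes cring: "cring (R i)" and t_hom: "t i \<in> ring_hom (R i) (R (Suc i))"
    and I0_ideal: "ideal I0 (R 0)"
begin

abbreviation E where "E \<equiv> ext_ideal R t I0"
abbreviation \<pi> where "\<pi> i x \<equiv> E i +>\<^bsub>R i\<^esub> x"

lemma ring: "ring (R i)"
  using cring by (rule cring.axioms(1))

lemma t_hom_ring: "ring_hom_ring (R i) (R (Suc i)) (t i)"
  by (rule ring_hom_ringI2[OF ring ring t_hom])

lemma tower_map_hom: "tower_map t m k \<in> ring_hom (R m) (R (m + k))"
  using t_hom by (rule tower_map_ring_hom)

lemma tower_map_I0_carrier: "tower_map t 0 i ` I0 \<subseteq> carrier (R i)"
  using ring_hom_closed[OF tower_map_hom] ideal.Icarr[OF I0_ideal] by fastforce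

lemma ext_ideal_ideal: "ideal (E i) (R i)"
  unfolding ext_ideal_def by (rule ring.genideal_ideal[OF ring tower_map_I0_carrier])

lemma tower_map_I0: "x \<in> I0 \<Longrightarrow> tower_map t 0 i x \<in> E i"
  unfolding ext_ideal_def using ring.genideal_self[OF ring tower_map_I0_carrier] by blast

lemma t_ext_ideal: "x \<in> E i \<Longrightarrow> t i x \<in> E (Suc i)"
proof -
  interpret t: ring_hom_ring "R i" "R (Suc i)" "t i" by (rule t_hom_ring)
  have "tower_map t 0 i ` I0 \<subseteq> {y \<in> carrier (R i). t i y \<in> E (Suc i)}"
    using tower_map_I0_carrier tower_map_I0[of _ "Suc i"] by auto
  then have "E i \<subseteq> {y \<in> carrier (R i). t i y \<in> E (Suc i)}"
    unfolding ext_ideal_def[of R t I0 i]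
    by (rule ring.genideal_minimal[OF ring t.ideal_vimage[OF ext_ideal_ideal]])
  then show "x \<in> E i \<Longrightarrow> t i x \<in> E (Suc i)" by blast
qed

lemma Rbar_cring: "cring (Rbar R t I0 i)"
  unfolding Rbar_def by (rule ideal.quotient_is_cring[OF ext_ideal_ideal cring])

lemma coset_hom: "\<pi> i \<in> ring_hom (R i) (Rbar R t I0 i)"
  unfolding Rbar_def by (rule ideal.rcos_ring_hom[OF ext_ideal_ideal])

lemma coset_surj: "\<pi> i ` carrier (R i) = carrier (Rbar R t I0 i)"
  unfolding Rbar_def carrier_FactRing ..

lemma tbar_coset:
  assumes x: "x \<in> carrier (R i)"
  shows "tbar R t I0 i (\<pi> i x) = \<pi> (Suc i) (t i x)"
proof (intro equalityI subsetI)
  interpret t: ring_hom_ring "R i" "R (Suc i)" "t i" by (rule t_hom_ring)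
  interpret E: ideal "E i" "R i" by (rule ext_ideal_ideal)
  interpret E': ideal "E (Suc i)" "R (Suc i)" by (rule ext_ideal_ideal)
  fix y
  assume "y \<in> tbar R t I0 i (\<pi> i x)"
  then obtain e' z where e': "e' \<in> E (Suc i)" and z: "z \<in> \<pi> i x"
    and y: "y = e' \<oplus>\<^bsub>R (Suc i)\<^esub> t i z"
    unfolding tbar_def mem_set_add_iff by blast
  obtain e where e: "e \<in> E i" and "z = e \<oplus>\<^bsub>R i\<^esub> x"
    using z unfolding mem_a_r_coset_iff by blast
  have "y = (e' \<oplus>\<^bsub>R (Suc i)\<^esub> t i e) \<oplus>\<^bsub>R (Suc i)\<^esub> t i x"
    using e e' x unfolding y \<open>z = e \<oplus>\<^bsub>R i\<^esub> x\<close> by (simp add: t.S.a_assoc)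
  moreover have "e' \<oplus>\<^bsub>R (Suc i)\<^esub> t i e \<in> E (Suc i)"
    using e e' t_ext_ideal by simp
  ultimately show "y \<in> \<pi> (Suc i) (t i x)"
    unfolding mem_a_r_coset_iff by blast
next
  interpret t: ring_hom_ring "R i" "R (Suc i)" "t i" by (rule t_hom_ring)
  interpret E: ideal "E i" "R i" by (rule ext_ideal_ideal)
  fix y
  assume "y \<in> \<pi> (Suc i) (t i x)"
  then obtain e' where "e' \<in> E (Suc i)" "y = e' \<oplus>\<^bsub>R (Suc i)\<^esub> t i x"
    unfolding mem_a_r_coset_iff by blast
  moreover have "x \<in> \<pi> i x"
    unfolding mem_a_r_coset_iff using x by force
  ultimately show "y \<in> tbar R t I0 i (\<pi> i x)"
    unfolding tbar_def mem_set_add_iff by blast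
qed

lemma tbar_hom: "tbar R t I0 i \<in> ring_hom (Rbar R t I0 i) (Rbar R t I0 (Suc i))"
  by (rule induced_ring_hom[OF coset_hom coset_surj ring_hom_trans[OF t_hom coset_hom]])
    (simp_all add: tbar_coset ring)

lemma Rbar_char:
  assumes "add_pow (R 0) p \<one>\<^bsub>R 0\<^esub> \<in> I0"
  shows "add_pow (Rbar R t I0 i) (p::nat) \<one>\<^bsub>Rbar R t I0 i\<^esub> = \<zero>\<^bsub>Rbar R t I0 i\<^esub>"
proof -
  interpret \<iota>: ring_hom_ring "R 0" "R i" "tower_map t 0 i"
    using ring_hom_ringI2[OF ring ring tower_map_hom[of 0 i]] by simp
  interpret \<pi>: ring_hom_ring "R i" "Rbar R t I0 i" "\<pi> i"
    by (rule ring_hom_ringI2[OF ring cring.axioms(1)[OF Rbar_cring] coset_hom])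
  interpret E: ideal "E i" "R i" by (rule ext_ideal_ideal)
  have "add_pow (R i) p \<one>\<^bsub>R i\<^esub> \<in> E i"
    using tower_map_I0[OF assms, of i] by (simp add: \<iota>.hom_add_pow)
  then have "\<pi> i (add_pow (R i) p \<one>\<^bsub>R i\<^esub>) = \<zero>\<^bsub>Rbar R t I0 i\<^esub>"
    unfolding Rbar_def FactRing_def by (simp add: E.a_rcos_const)
  then show ?thesis
    by (simp add: \<pi>.hom_add_pow)
qed

lemma coset_image_genideal:
  assumes b: "b \<in> carrier (R 1)"
  shows "\<pi> (Suc i) ` (Idl\<^bsub>R (Suc i)\<^esub> (tower_map t 1 i ` (PIdl\<^bsub>R 1\<^esub> b)))
    = PIdl\<^bsub>Rbar R t I0 (Suc i)\<^esub> (\<pi> (Suc i) (tower_map t 1 i b))"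
proof -
  interpret \<iota>: ring_hom_cring "R 1" "R (Suc i)" "tower_map t 1 i"
    using cring tower_map_hom[of 1 i] by (simp add: ring_hom_cring_def ring_hom_cring_axioms_def)
  interpret \<pi>: ring_hom_cring "R (Suc i)" "Rbar R t I0 (Suc i)" "\<pi> (Suc i)"
    using cring Rbar_cring coset_hom by (simp add: ring_hom_cring_def ring_hom_cring_axioms_def)
  have "tower_map t 1 i b \<in> carrier (R (Suc i))"
    using ring_hom_closed[OF tower_map_hom[of 1 i] b] by simp
  then show ?thesis
    unfolding \<iota>.genideal_image_cgenideal[OF b] using coset_surj by (rule \<pi>.surj_image_cgenideal)
qed

context
  fixes p :: nat
  assumes insep: "purely_inseparable_tower p R t I0"
begin

lemma tbar_inj: "inj_on (tbar R t I0 i) (carrier (Rbar R t I0 i))"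
  using insep unfolding purely_inseparable_tower_def by blast

lemma Frob_F_spec:
  assumes z: "z \<in> carrier (Rbar R t I0 (Suc i))"
  shows "Frob_F p R t I0 i z \<in> carrier (Rbar R t I0 i)"
    and "tbar R t I0 i (Frob_F p R t I0 i z) = z [^]\<^bsub>Rbar R t I0 (Suc i)\<^esub> p"
proof -
  have "z [^]\<^bsub>Rbar R t I0 (Suc i)\<^esub> p \<in> tbar R t I0 i ` carrier (Rbar R t I0 i)"
    using insep z unfolding purely_inseparable_tower_def by blast
  then obtain y where "y \<in> carrier (Rbar R t I0 i)" "tbar R t I0 i y = z [^]\<^bsub>Rbar R t I0 (Suc i)\<^esub> p"
    by blast
  then have "\<exists>!y. y \<in> carrier (Rbar R t I0 i) \<and> tbar R t I0 i y = z [^]\<^bsub>Rbar R t I0 (Suc i)\<^esub> p"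
    using inj_onD[OF tbar_inj] by metis
  then have "Frob_F p R t I0 i z \<in> carrier (Rbar R t I0 i) \<and>
      tbar R t I0 i (Frob_F p R t I0 i z) = z [^]\<^bsub>Rbar R t I0 (Suc i)\<^esub> p"
    unfolding Frob_F_def by (rule theI')
  then show "Frob_F p R t I0 i z \<in> carrier (Rbar R t I0 i)"
    and "tbar R t I0 i (Frob_F p R t I0 i z) = z [^]\<^bsub>Rbar R t I0 (Suc i)\<^esub> p"
    by simp_all
qed

lemma Frob_F_hom:
  assumes p: "Factorial_Ring.prime p"
  shows "Frob_F p R t I0 i \<in> ring_hom (Rbar R t I0 (Suc i)) (Rbar R t I0 i)"
proof -
  have "add_pow (Rbar R t I0 (Suc i)) p \<one>\<^bsub>Rbar R t I0 (Suc i)\<^esub> = \<zero>\<^bsub>Rbar R t I0 (Suc i)\<^esub>"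
    using insep Rbar_char unfolding purely_inseparable_tower_def by blast
  then show ?thesis
    by (rule frobenius_factor_ring_hom[OF Rbar_cring Rbar_cring p _ tbar_hom tbar_inj Frob_F_spec])
qed

end

end

lemma purely_inseparable_quotient_tower:
  "purely_inseparable_tower p R t I0 \<Longrightarrow> quotient_tower R t I0"
  unfolding purely_inseparable_tower_def by (intro quotient_tower.intro) blast+

lemma small_tilt_eq: "small_tilt p R t I0 = inverse_limit_ring (Rbar R t I0) (Frob_F p R t I0)"
  unfolding small_tilt_def inverse_limit_ring_def ..

lemma small_tilt_ideal_eq:
  "small_tilt_ideal p R t I0 = a_kernel (small_tilt p R t I0) (Rbar R t I0 0) (\<lambda>x. x 0)"
  unfolding small_tilt_ideal_def a_kernel_def' ..

lemma preperfectoid_frobenius_tower: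
  assumes p: "Factorial_Ring.prime p" and pt: "preperfectoid_tower p R t I0"
  shows "\<exists>u. frobenius_tower (Rbar R t I0) (Frob_F p R t I0) p (tbar R t I0) u"
proof -
  have insep: "purely_inseparable_tower p R t I0"
    using pt unfolding preperfectoid_tower_def by blast
  interpret quotient_tower R t I0
    using insep by (rule purely_inseparable_quotient_tower)
  obtain I1 b where b: "b \<in> carrier (R 1)" and I1: "I1 = PIdl\<^bsub>R 1\<^esub> b"
    and kernel: "\<And>i. {z \<in> carrier (Rbar R t I0 (Suc i)). Frob_F p R t I0 i z = \<zero>\<^bsub>Rbar R t I0 i\<^esub>}
                      = \<pi> (Suc i) ` (Idl\<^bsub>R (Suc i)\<^esub> (tower_map t 1 i ` I1))"
    using pt unfolding preperfectoid_tower_def by (elim conjE exE bexE) (rule that; blast)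
  define u where "u i = \<pi> (Suc i) (tower_map t 1 i b)" for i
  have u_carrier: "u i \<in> carrier (Rbar R t I0 (Suc i))" for i
    unfolding u_def using ring_hom_closed[OF tower_map_hom[of 1 i] b] coset_surj by auto
  have F_surj: "Frob_F p R t I0 i ` carrier (Rbar R t I0 (Suc i)) = carrier (Rbar R t I0 i)" for i
    using pt unfolding preperfectoid_tower_def by blast
  have kernel_F: "a_kernel (Rbar R t I0 (Suc i)) (Rbar R t I0 i) (Frob_F p R t I0 i)
      = PIdl\<^bsub>Rbar R t I0 (Suc i)\<^esub> (u i)" for i
    unfolding a_kernel_def' kernel I1 u_def using b by (rule coset_image_genideal)
  have T_u: "tbar R t I0 (Suc i) (u i) = u (Suc i)" for i
    unfolding u_def using ring_hom_closed[OF tower_map_hom[of 1 i] b] by (simp add: tbar_coset)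
  have "frobenius_tower (Rbar R t I0) (Frob_F p R t I0) p (tbar R t I0) u"
    using prime_gt_1_nat[OF p]
    by (intro frobenius_tower.intro ring_inverse_system.intro frobenius_tower_axioms.intro)
      (simp_all add: Rbar_cring Frob_F_hom[OF insep p] tbar_hom tbar_inj[OF insep]
        Frob_F_spec[OF insep] F_surj u_carrier kernel_F T_u)
  then show ?thesis by blast
qed

theorem lemma2p10:
  fixes p :: nat and R :: "nat \<Rightarrow> 'a ring" and t :: "nat \<Rightarrow> 'a \<Rightarrow> 'a" and I0 :: "'a set"
    and i :: nat
  assumes "Factorial_Ring.prime p"
    and "preperfectoid_tower p R t I0"
  shows "inj_on
           (frob_quot (small_tilt p R t I0) p
              (small_tilt_ideal p R t I0 [^]\<^bsub>ideals_set (small_tilt p R t I0)\<^esub> (p ^ Suc i)))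
           (carrier (small_tilt p R t I0 Quot
              (small_tilt_ideal p R t I0 [^]\<^bsub>ideals_set (small_tilt p R t I0)\<^esub> (p ^ i))))"
proof -
  obtain u where "frobenius_tower (Rbar R t I0) (Frob_F p R t I0) p (tbar R t I0) u"
    using preperfectoid_frobenius_tower[OF assms] by blast
  then interpret frobenius_tower "Rbar R t I0" "Frob_F p R t I0" p "tbar R t I0" u .
  show ?thesis
    unfolding small_tilt_ideal_eq small_tilt_eq by (rule frob_quot_inj)
qed

end
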